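(* Let $X$ be a finite two-wide poset and let $w,y\in X$ with $w<y$ and $w\not\prec y$. Then there exist elements $x,\tilde x\in X$ with $x\neq\tilde x$, $w\prec x<y$ and $w\prec\tilde x<y$.
   Context: In a poset, write $a\prec b$ if $a<b$ and there is no $c$ with $a<c<b$. A poset $X$ is two-wide if for any $x,z,y\in X$ with $x\prec z\prec y$ there exists $z'\in X$, $z'\neq z$, with $x\prec z'\prec y$. *)

theory Defs
  imports Main
begin

definition covers :: "'a::order \<Rightarrow> 'a \<Rightarrow> bool" (infix "\<prec>\<^sub>c" 50) where
  "a \<prec>\<^sub>c b \<longleftrightarrow> a < b \<and> \<not> (\<exists>c. a < c \<and> c < b)"

definition two_wide :: "'a::order itself \<Rightarrow> bool" where
  "two_wide _ \<longleftrightarrow> (\<forall>x z y::'a. x \<prec>\<^sub>c z \<and> z \<prec>\<^sub>c y \<longrightarrow>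
      (\<exists>z'. z' \<noteq> z \<and> x \<prec>\<^sub>c z' \<and> z' \<prec>\<^sub>c y))"

end

theory Submission
  imports Defs
begin

text \<open>Pick any \<open>c\<close> strictly between \<open>w\<close> and \<open>y\<close>. By finiteness \<open>w\<close> has a cover
  \<open>x \<le> c\<close>, and \<open>x\<close> has a cover \<open>z \<le> y\<close>. Two-wideness applied to the chain
  \<open>w \<prec> x \<prec> z\<close> yields a second cover \<open>x' \<noteq> x\<close> of \<open>w\<close> below \<open>z\<close>, hence below \<open>y\<close>.\<close>

lemma covers_imp_less: "a \<prec>\<^sub>c b \<Longrightarrow> a < b"
  unfolding covers_def by simp

lemma exists_cover_below:
  fixes a b :: "'a::{order, finite}"
  assumes "a < b"
  shows "\<exists>c. a \<prec>\<^sub>c c \<and> c \<le> b"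
proof -
  obtain m where m: "m \<in> {c. a < c \<and> c \<le> b}"
    and minimal: "\<And>d. d \<in> {c. a < c \<and> c \<le> b} \<Longrightarrow> d \<le> m \<Longrightarrow> m = d"
    using finite_has_minimal[of "{c. a < c \<and> c \<le> b}"] assms by auto
  have "\<not> (a < d \<and> d < m)" for d
    using minimal[of d] m by force
  then show ?thesis
    using m unfolding covers_def by blast
qed

lemma two_wideD:
  fixes x z y :: "'a::order"
  assumes "two_wide TYPE('a)" and "x \<prec>\<^sub>c z" and "z \<prec>\<^sub>c y"
  obtains z' where "z' \<noteq> z" and "x \<prec>\<^sub>c z'" and "z' \<prec>\<^sub>c y"
  using assms unfolding two_wide_def by blast

theorem mainTheorem4:
  fixes w y :: "'a::{order, finite}"
  assumes "two_wide TYPE('a)"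
    and "w < y"
    and "\<not> (w \<prec>\<^sub>c y)"
  shows "\<exists>x x'. x \<noteq> x' \<and> w \<prec>\<^sub>c x \<and> x < y \<and> w \<prec>\<^sub>c x' \<and> x' < y"
proof -
  obtain c where "w < c" and "c < y"
    using assms(2,3) unfolding covers_def by blast
  then obtain x where wx: "w \<prec>\<^sub>c x" and "x < y"
    using exists_cover_below[of w c] by (auto dest: le_less_trans)
  then obtain z where xz: "x \<prec>\<^sub>c z" and "z \<le> y"
    using exists_cover_below by blast
  obtain x' where "x' \<noteq> x" and "w \<prec>\<^sub>c x'" and "x' \<prec>\<^sub>c z"
    using two_wideD[OF assms(1) wx xz] .
  then have "x' < y"
    using \<open>z \<le> y\<close> by (auto dest: covers_imp_less less_le_trans)
  then show ?thesis
    using \<open>x' \<noteq> x\<close> \<open>w \<prec>\<^sub>c x'\<close> wx \<open>x < y\<close> by blast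
qed

end
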